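(* Suppose $A\subseteq\mathbb Z_m$ with $d<|A|<m$, and let $G_d$ be the set of $x\in\mathbb Z_m$ such that $|(A+x)\cup A|\le|A|+d$. Then $|G_d|\le\frac{|A|^2}{|A|-d}$.
   Context: $A+x=\{a+x:a\in A\}$ in the cyclic group $\mathbb Z_m$. *)

theory Defs
  imports Complex_Main
begin

text \<open>The cyclic group Z_m is modelled by the carrier {..<m} of natural numbers
with addition modulo m. The translate A + x = {a + x : a in A}.\<close>

definition zm_translate :: "nat \<Rightarrow> nat set \<Rightarrow> nat \<Rightarrow> nat set" where
  "zm_translate m A x = (\<lambda>a. (a + x) mod m) ` A"

end

theory Submission
  imports Defs "HOL-Number_Theory.Cong"
begin

text \<open>Double counting. Since \<open>|A + x| = |A|\<close>, every \<open>x \<in> G\<^sub>d\<close> satisfies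
  \<open>|(A + x) \<inter> A| \<ge> |A| - d\<close>. On the other hand, summing \<open>|(A + x) \<inter> A|\<close> over all
  \<open>x \<in> \<int>\<^sub>m\<close> counts every pair \<open>(a, b) \<in> A \<times> A\<close> exactly once (namely for
  \<open>x = b - a\<close>), so the sum is \<open>|A|\<^sup>2\<close>. Hence \<open>|G\<^sub>d| (|A| - d) \<le> |A|\<^sup>2\<close>.\<close>

lemma inj_on_add_mod: "inj_on (\<lambda>a. (a + x) mod m) {..<m}" for x m :: nat
  by (auto simp: inj_on_def cong_def[symmetric] cong_add_rcancel_nat) (simp add: cong_def)

lemma bij_betw_add_mod:
  fixes x m :: nat
  assumes "0 < m"
  shows "bij_betw (\<lambda>a. (a + x) mod m) {..<m} {..<m}"
proof -
  have "(\<lambda>a. (a + x) mod m) ` {..<m} = {..<m}"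
    using assms by (intro endo_inj_surj inj_on_add_mod) auto
  then show ?thesis
    using inj_on_add_mod by (auto simp: bij_betw_def)
qed

lemma card_zm_translate:
  assumes "A \<subseteq> {..<m}"
  shows "card (zm_translate m A x) = card A"
  unfolding zm_translate_def
  using assms by (intro card_image inj_on_subset[OF inj_on_add_mod])

lemma card_zm_translate_Un_Int:
  assumes "A \<subseteq> {..<m}"
  shows "card (zm_translate m A x \<union> A) + card (zm_translate m A x \<inter> A) = 2 * card A"
proof -
  have "finite A"
    using assms finite_subset by blast
  then show ?thesis
    using card_Un_Int[of "zm_translate m A x" A] card_zm_translate[OF assms]
    by (simp add: zm_translate_def)
qed

lemma card_zm_translate_Int:
  assumes "A \<subseteq> {..<m}"
  shows "card (zm_translate m A x \<inter> A) = card {a \<in> A. (a + x) mod m \<in> A}"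
proof -
  have "zm_translate m A x \<inter> A = (\<lambda>a. (a + x) mod m) ` {a \<in> A. (a + x) mod m \<in> A}"
    unfolding zm_translate_def by auto
  moreover have "inj_on (\<lambda>a. (a + x) mod m) {a \<in> A. (a + x) mod m \<in> A}"
    using assms by (auto intro: inj_on_subset[OF inj_on_add_mod])
  ultimately show ?thesis
    by (simp add: card_image)
qed

lemma sum_card_zm_translate_Int:
  assumes "A \<subseteq> {..<m}"
  shows "(\<Sum>x<m. card (zm_translate m A x \<inter> A)) = card A ^ 2"
proof -
  have fin: "finite A"
    using assms finite_subset by blast
  have shift: "(\<Sum>x<m. of_bool ((a + x) mod m \<in> A)) = card A" if "a \<in> A" for a
  proof -
    have "0 < m"
      using that assms by auto
    then have "(\<Sum>x<m. of_bool ((x + a) mod m \<in> A)) = (\<Sum>y<m. of_bool (y \<in> A) :: nat)"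
      by (rule sum.reindex_bij_betw[OF bij_betw_add_mod])
    also have "\<dots> = card A"
      using assms by (simp add: Int_absorb1 Collect_mem_eq)
    finally show ?thesis
      by (simp add: add.commute)
  qed
  have "(\<Sum>x<m. card (zm_translate m A x \<inter> A))
        = (\<Sum>x<m. \<Sum>a\<in>A. of_bool ((a + x) mod m \<in> A))"
    unfolding card_zm_translate_Int[OF assms] using fin by (simp add: Int_def)
  also have "\<dots> = (\<Sum>a\<in>A. \<Sum>x<m. of_bool ((a + x) mod m \<in> A))"
    by (rule sum.swap)
  also have "\<dots> = (\<Sum>a\<in>A. card A)"
    using shift by simp
  finally show ?thesis
    by (simp add: power2_eq_square)
qed

theorem lemma2p6:
  fixes m d :: nat and A :: "nat set"
  assumes "A \<subseteq> {..<m}" and "d < card A" and "card A < m"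
  shows "real (card {x \<in> {..<m}. card (zm_translate m A x \<union> A) \<le> card A + d})
           \<le> real (card A) ^ 2 / (real (card A) - real d)"
proof -
  define G where "G = {x \<in> {..<m}. card (zm_translate m A x \<union> A) \<le> card A + d}"
  have "card G * (card A - d) = (\<Sum>x\<in>G. card A - d)"
    by simp
  also have "\<dots> \<le> (\<Sum>x\<in>G. card (zm_translate m A x \<inter> A))"
  proof (rule sum_mono)
    fix x
    assume "x \<in> G"
    then show "card A - d \<le> card (zm_translate m A x \<inter> A)"
      using card_zm_translate_Un_Int[OF assms(1), of x] unfolding G_def by auto
  qed
  also have "\<dots> \<le> (\<Sum>x<m. card (zm_translate m A x \<inter> A))"
    unfolding G_def by (intro sum_mono2) auto
  also have "\<dots> = card A ^ 2"
    using assms(1) by (rule sum_card_zm_translate_Int)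
  finally have "real (card G) * (real (card A) - real d) \<le> real (card A) ^ 2"
    using assms(2) by (metis less_imp_le of_nat_diff of_nat_le_iff of_nat_mult of_nat_power)
  then show ?thesis
    using assms(2) unfolding G_def by (simp add: pos_le_divide_eq)
qed

end
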